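(* Let $R\subset B$ be domains, $a_1,\ldots,a_s,b\in B\setminus\{0\}$ with $b$ not a unit of $B$, $R[y_1,\ldots,y_s]$ a polynomial ring, $\sigma:R[y_1,\ldots,y_s]\to B$ the $R$-algebra homomorphism with $\sigma(y_i)=a_i$, $\pi:B\to B/bB$ the natural surjection, $\bar\sigma:=\pi\circ\sigma$, and $A:=R[a_1,\ldots,a_s]$. If there exists $\mathcal S\subset R[y_1,\ldots,y_s]$ such that $\ker\bar\sigma$ is the ideal generated by $\mathcal S$ and $\sigma(\mathcal S)\subset bA[b]$, then $A[b^{\pm1}]\cap B=A[b]$ (intersection in $Q(B)$). If moreover $b\in A$, then $A[b^{-1}]\cap B=A$.
   Context: $Q(B)$ denotes the field of fractions of $B$. *)

theory Defs
  imports Main "HOL-Library.Poly_Mapping" "HOL-Computational_Algebra.Fraction_Field"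
begin

text \<open>Multivariate polynomials over the ambient domain 'b, in variables y_0..y_{s-1},
  represented as finitely supported maps from monomials (exponent vectors) to coefficients.\<close>
type_synonym 'b mpoly = "(nat \<Rightarrow>\<^sub>0 nat) \<Rightarrow>\<^sub>0 'b"

definition is_subring :: "'b::comm_ring_1 set \<Rightarrow> bool" where
  "is_subring R \<longleftrightarrow> 0 \<in> R \<and> 1 \<in> R \<and> (\<forall>x\<in>R. \<forall>y\<in>R. x + y \<in> R \<and> x - y \<in> R \<and> x * y \<in> R)"

definition poly_ring :: "'b::comm_ring_1 set \<Rightarrow> nat \<Rightarrow> 'b mpoly set" where
  "poly_ring R s = {p. \<forall>m. Poly_Mapping.lookup p m \<in> R \<and> (Poly_Mapping.lookup p m \<noteq> 0 \<longrightarrow> Poly_Mapping.keys m \<subseteq> {..<s})}"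

definition eval_mpoly :: "(nat \<Rightarrow> 'b::comm_ring_1) \<Rightarrow> 'b mpoly \<Rightarrow> 'b" where
  "eval_mpoly a p = (\<Sum>m\<in>Poly_Mapping.keys p. Poly_Mapping.lookup p m * (\<Prod>i\<in>Poly_Mapping.keys m. a i ^ Poly_Mapping.lookup m i))"

definition ideal_gen :: "'b::comm_ring_1 mpoly set \<Rightarrow> 'b mpoly set \<Rightarrow> 'b mpoly set" where
  "ideal_gen P S = {f. \<exists>n (q::nat \<Rightarrow> 'b mpoly) (g::nat \<Rightarrow> 'b mpoly).
      (\<forall>j<n. q j \<in> P \<and> g j \<in> S) \<and> f = (\<Sum>j<n. q j * g j)}"

definition alg_gen :: "'b::comm_ring_1 set \<Rightarrow> nat \<Rightarrow> (nat \<Rightarrow> 'b) \<Rightarrow> 'b set" where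
  "alg_gen R s a = eval_mpoly a ` poly_ring R s"

definition adjoin :: "'b::comm_ring_1 set \<Rightarrow> 'b \<Rightarrow> 'b set" where
  "adjoin A b = {x. \<exists>n c. (\<forall>k\<le>n. c k \<in> A) \<and> x = (\<Sum>k\<le>n. c k * b ^ k)}"

definition localize :: "'b::idom set \<Rightarrow> 'b \<Rightarrow> 'b fract set" where
  "localize C b = {Fract x (b ^ n) | x n. x \<in> C}"

abbreviation emb :: "'b::idom \<Rightarrow> 'b fract" where
  "emb x \<equiv> Fract x 1"

end

theory Submission
  imports Defs "HOL-Computational_Algebra.Polynomial"
begin

(* Suppose b w lies in A[b] for some w in B. Split off the constant term: b w = c + b y with
   c in A and y in A[b]. Then b divides c = sigma r, so r lies in the kernel of sigma-bar, which
   is generated by S; as sigma maps S into b A[b] and A[b] is an A-module, c = b x with x in A[b].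
   Cancelling b gives w = x + y in A[b]. Iterating, b^n w in A[b] forces w in A[b], and this is
   precisely the statement that an element of B lying in A[b, 1/b] already lies in A[b].
   If b is in A, then A[b] = A. *)

lemma is_subring_sum:
  assumes "is_subring A" and "\<And>j. j \<in> J \<Longrightarrow> f j \<in> A"
  shows "(\<Sum>j\<in>J. f j) \<in> A"
  using assms(2)
  by (induct J rule: infinite_finite_induct) (use assms(1) in \<open>auto simp: is_subring_def\<close>)

lemma is_subring_power: "is_subring A \<Longrightarrow> x \<in> A \<Longrightarrow> x ^ n \<in> A"
  by (induct n) (auto simp: is_subring_def)

lemma poly_mapping_add_single_induct [case_names zero add_single]:
  assumes "P 0"
    and "\<And>p m c. m \<notin> Poly_Mapping.keys p \<Longrightarrow> c \<noteq> 0 \<Longrightarrow> P p \<Longrightarrow> P (p + Poly_Mapping.single m c)"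
  shows "P p"
proof (induct p rule: Poly_Mapping.update_induct)
  case const
  show ?case by (fact assms(1))
next
  case (update p m c)
  have "Poly_Mapping.update m c p = p + Poly_Mapping.single m c"
    using update(1)
    by (intro poly_mapping_eqI) (auto simp: lookup_update lookup_add lookup_single in_keys_iff when_def)
  with assms(2)[OF update] show ?case by simp
qed

definition eval_monom :: "(nat \<Rightarrow> 'b::comm_ring_1) \<Rightarrow> (nat \<Rightarrow>\<^sub>0 nat) \<Rightarrow> 'b" where
  "eval_monom a m = (\<Prod>i\<in>Poly_Mapping.keys m. a i ^ Poly_Mapping.lookup m i)"

lemma eval_monom_superset:
  "finite K \<Longrightarrow> Poly_Mapping.keys m \<subseteq> K \<Longrightarrow> eval_monom a m = (\<Prod>i\<in>K. a i ^ Poly_Mapping.lookup m i)"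
  unfolding eval_monom_def by (rule prod.mono_neutral_left) (auto simp: in_keys_iff)

lemma eval_monom_zero [simp]: "eval_monom a 0 = 1"
  by (simp add: eval_monom_def)

lemma eval_monom_add: "eval_monom a (m + m') = eval_monom a m * eval_monom a m'"
proof -
  let ?K = "Poly_Mapping.keys m \<union> Poly_Mapping.keys m'"
  have "eval_monom a (m + m') = (\<Prod>i\<in>?K. a i ^ Poly_Mapping.lookup (m + m') i)"
    using keys_add[of m m'] by (intro eval_monom_superset) auto
  also have "\<dots> = (\<Prod>i\<in>?K. a i ^ Poly_Mapping.lookup m i) * (\<Prod>i\<in>?K. a i ^ Poly_Mapping.lookup m' i)"
    by (simp add: lookup_add power_add prod.distrib)
  also have "\<dots> = eval_monom a m * eval_monom a m'"
    by (simp add: eval_monom_superset[of ?K m] eval_monom_superset[of ?K m'])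
  finally show ?thesis .
qed

lemma eval_mpoly_superset:
  "finite K \<Longrightarrow> Poly_Mapping.keys p \<subseteq> K \<Longrightarrow>
    eval_mpoly a p = (\<Sum>m\<in>K. Poly_Mapping.lookup p m * eval_monom a m)"
  unfolding eval_mpoly_def eval_monom_def[symmetric]
  by (rule sum.mono_neutral_left) (auto simp: in_keys_iff)

lemma eval_mpoly_zero [simp]: "eval_mpoly a 0 = 0"
  by (simp add: eval_mpoly_def)

lemma eval_mpoly_single: "eval_mpoly a (Poly_Mapping.single m c) = c * eval_monom a m"
  by (subst eval_mpoly_superset[of "{m}"]) auto

lemma eval_mpoly_one [simp]: "eval_mpoly a 1 = 1"
  using eval_mpoly_single[of a 0 1] by simp

lemma eval_mpoly_add: "eval_mpoly a (p + q) = eval_mpoly a p + eval_mpoly a q"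
proof -
  let ?K = "Poly_Mapping.keys p \<union> Poly_Mapping.keys q"
  have "eval_mpoly a (p + q) = (\<Sum>m\<in>?K. Poly_Mapping.lookup (p + q) m * eval_monom a m)"
    using keys_add[of p q] by (intro eval_mpoly_superset) auto
  also have "\<dots> = (\<Sum>m\<in>?K. Poly_Mapping.lookup p m * eval_monom a m)
      + (\<Sum>m\<in>?K. Poly_Mapping.lookup q m * eval_monom a m)"
    by (simp add: lookup_add distrib_right sum.distrib)
  also have "\<dots> = eval_mpoly a p + eval_mpoly a q"
    by (simp add: eval_mpoly_superset[of ?K p] eval_mpoly_superset[of ?K q])
  finally show ?thesis .
qed

lemma eval_mpoly_diff: "eval_mpoly a (p - q) = eval_mpoly a p - eval_mpoly a q"
  using eval_mpoly_add[of a "p - q" q] by (simp add: eq_diff_eq)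

lemma eval_mpoly_sum: "eval_mpoly a (\<Sum>j\<in>J. f j) = (\<Sum>j\<in>J. eval_mpoly a (f j))"
  by (induct J rule: infinite_finite_induct) (simp_all add: eval_mpoly_add)

lemma eval_mpoly_single_mult:
  "eval_mpoly a (Poly_Mapping.single m c * q) = c * eval_monom a m * eval_mpoly a q"
  by (induct q rule: poly_mapping_add_single_induct)
    (simp_all add: distrib_left eval_mpoly_add mult_single eval_mpoly_single eval_monom_add algebra_simps)

lemma eval_mpoly_mult: "eval_mpoly a (p * q) = eval_mpoly a p * eval_mpoly a q"
  by (induct p rule: poly_mapping_add_single_induct)
    (simp_all add: distrib_right eval_mpoly_add eval_mpoly_single_mult eval_mpoly_single)

lemma poly_ring_single:
  "0 \<in> R \<Longrightarrow> c \<in> R \<Longrightarrow> Poly_Mapping.keys m \<subseteq> {..<s} \<Longrightarrow> Poly_Mapping.single m c \<in> poly_ring R s"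
  unfolding poly_ring_def by (auto simp: lookup_single when_def)

lemma poly_ring_induct [consumes 2, case_names zero add_single]:
  assumes "p \<in> poly_ring R s" and "0 \<in> R" and "P 0"
    and "\<And>p m c. p \<in> poly_ring R s \<Longrightarrow> c \<in> R \<Longrightarrow> Poly_Mapping.keys m \<subseteq> {..<s} \<Longrightarrow> P p
      \<Longrightarrow> P (p + Poly_Mapping.single m c)"
  shows "P p"
proof -
  have "p \<in> poly_ring R s \<longrightarrow> P p"
  proof (induct p rule: poly_mapping_add_single_induct)
    case zero
    show ?case using assms(3) by simp
  next
    case (add_single p m c)
    have lookup_sum: "Poly_Mapping.lookup (p + Poly_Mapping.single m c) m' =
        (if m' = m then c else Poly_Mapping.lookup p m')" for m'
      using add_single(1) by (auto simp: lookup_add lookup_single in_keys_iff when_def)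
    show ?case
    proof
      assume sum_in: "p + Poly_Mapping.single m c \<in> poly_ring R s"
      then have "Poly_Mapping.lookup (p + Poly_Mapping.single m c) m \<in> R"
        and "Poly_Mapping.lookup (p + Poly_Mapping.single m c) m \<noteq> 0 \<longrightarrow> Poly_Mapping.keys m \<subseteq> {..<s}"
        unfolding poly_ring_def by blast+
      then have "c \<in> R" "Poly_Mapping.keys m \<subseteq> {..<s}"
        using add_single(2) lookup_sum[of m] by simp_all
      moreover have "p \<in> poly_ring R s"
        unfolding poly_ring_def
      proof (intro CollectI allI conjI impI)
        fix m'
        have "Poly_Mapping.lookup p m' = (if m' = m then 0 else Poly_Mapping.lookup (p + Poly_Mapping.single m c) m')"
          using lookup_sum add_single(1) by (simp add: in_keys_iff)
        then show "Poly_Mapping.lookup p m' \<in> R"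
          and "Poly_Mapping.lookup p m' \<noteq> 0 \<Longrightarrow> Poly_Mapping.keys m' \<subseteq> {..<s}"
          using sum_in assms(2) unfolding poly_ring_def by (auto split: if_splits)
      qed
      ultimately show "P (p + Poly_Mapping.single m c)"
        using add_single(3) assms(4) by blast
    qed
  qed
  with assms(1) show ?thesis by blast
qed

lemma poly_ring_pointwise:
  assumes "p \<in> poly_ring R s" "q \<in> poly_ring R s"
    and "\<And>x y. x \<in> R \<Longrightarrow> y \<in> R \<Longrightarrow> f x y \<in> R" and "f 0 0 = 0"
    and "\<And>m. Poly_Mapping.lookup r m = f (Poly_Mapping.lookup p m) (Poly_Mapping.lookup q m)"
  shows "r \<in> poly_ring R s"
  unfolding poly_ring_def
proof (intro CollectI allI conjI impI)
  fix m
  show "Poly_Mapping.lookup r m \<in> R"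
    using assms unfolding poly_ring_def by simp
  assume "Poly_Mapping.lookup r m \<noteq> 0"
  then have "Poly_Mapping.lookup p m \<noteq> 0 \<or> Poly_Mapping.lookup q m \<noteq> 0"
    using assms(4,5) by auto
  then show "Poly_Mapping.keys m \<subseteq> {..<s}"
    using assms(1,2) unfolding poly_ring_def by blast
qed

lemma poly_ring_add:
  "is_subring R \<Longrightarrow> p \<in> poly_ring R s \<Longrightarrow> q \<in> poly_ring R s \<Longrightarrow> p + q \<in> poly_ring R s"
  by (rule poly_ring_pointwise[where f = "(+)"]) (auto simp: is_subring_def lookup_add)

lemma poly_ring_diff:
  "is_subring R \<Longrightarrow> p \<in> poly_ring R s \<Longrightarrow> q \<in> poly_ring R s \<Longrightarrow> p - q \<in> poly_ring R s"
  by (rule poly_ring_pointwise[where f = "(-)"]) (auto simp: is_subring_def lookup_minus)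

lemma poly_ring_mult:
  assumes R: "is_subring R" and p: "p \<in> poly_ring R s" and q: "q \<in> poly_ring R s"
  shows "p * q \<in> poly_ring R s"
proof -
  have R0: "0 \<in> R" using R by (simp add: is_subring_def)
  have single_mult: "Poly_Mapping.single m c * q \<in> poly_ring R s"
    if "c \<in> R" "Poly_Mapping.keys m \<subseteq> {..<s}" for m c
    using q R0
  proof (induct q rule: poly_ring_induct)
    case zero
    show ?case using R0 by (simp add: poly_ring_def)
  next
    case (add_single q m' c')
    have "Poly_Mapping.single (m + m') (c * c') \<in> poly_ring R s"
      using that add_single(2,3) R R0 keys_add[of m m']
      by (intro poly_ring_single) (auto simp: is_subring_def)
    with add_single(4) show ?case
      by (simp add: distrib_left mult_single poly_ring_add[OF R])
  qed
  from p R0 show ?thesis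
  proof (induct p rule: poly_ring_induct)
    case zero
    show ?case using R0 by (simp add: poly_ring_def)
  next
    case (add_single p m c)
    then show ?case
      by (simp add: distrib_right poly_ring_add[OF R] single_mult)
  qed
qed

lemma is_subring_poly_ring:
  assumes R: "is_subring R"
  shows "is_subring (poly_ring R s)"
proof -
  have "0 \<in> R" "1 \<in> R"
    using R by (simp_all add: is_subring_def)
  then have "0 \<in> poly_ring R s" "1 \<in> poly_ring R s"
    using poly_ring_single[of R 1 0 s] by (simp_all add: poly_ring_def)
  then show ?thesis
    unfolding is_subring_def[of "poly_ring R s"]
    by (simp add: poly_ring_add[OF R] poly_ring_diff[OF R] poly_ring_mult[OF R])
qed

lemma is_subring_alg_gen:
  assumes "is_subring R"
  shows "is_subring (alg_gen R s a)"
proof -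
  have P: "is_subring (poly_ring R s)"
    using assms by (rule is_subring_poly_ring)
  have eval_in: "eval_mpoly a p \<in> alg_gen R s a" if "p \<in> poly_ring R s" for p
    unfolding alg_gen_def using that by (rule imageI)
  have "0 \<in> alg_gen R s a" "1 \<in> alg_gen R s a"
    using eval_in[of 0] eval_in[of 1] P by (simp_all add: is_subring_def)
  moreover have "x + y \<in> alg_gen R s a \<and> x - y \<in> alg_gen R s a \<and> x * y \<in> alg_gen R s a"
    if xy: "x \<in> alg_gen R s a" "y \<in> alg_gen R s a" for x y
  proof -
    obtain p q where pq: "p \<in> poly_ring R s" "q \<in> poly_ring R s"
      and "x = eval_mpoly a p" "y = eval_mpoly a q"
      using xy unfolding alg_gen_def by blast
    moreover have "p + q \<in> poly_ring R s" "p - q \<in> poly_ring R s" "p * q \<in> poly_ring R s"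
      using P pq unfolding is_subring_def by blast+
    ultimately show ?thesis
      using eval_in[of "p + q"] eval_in[of "p - q"] eval_in[of "p * q"]
      by (simp add: eval_mpoly_add eval_mpoly_diff eval_mpoly_mult)
  qed
  ultimately show ?thesis
    unfolding is_subring_def by blast
qed

lemma mem_adjoin_iff:
  assumes A: "is_subring A"
  shows "x \<in> adjoin A b \<longleftrightarrow> (\<exists>p. (\<forall>i. coeff p i \<in> A) \<and> x = poly p b)"
proof
  assume "x \<in> adjoin A b"
  then obtain n c where c: "\<forall>k\<le>n. c k \<in> A" and x: "x = (\<Sum>k\<le>n. c k * b ^ k)"
    unfolding adjoin_def by blast
  define p where "p = (\<Sum>k\<le>n. monom (c k) k)"
  have "coeff p i \<in> A" for i
    unfolding p_def coeff_sum
    by (rule is_subring_sum[OF A]) (use A c in \<open>auto simp: is_subring_def\<close>)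
  moreover have "x = poly p b"
    by (simp add: x p_def poly_sum poly_monom)
  ultimately show "\<exists>p. (\<forall>i. coeff p i \<in> A) \<and> x = poly p b"
    by blast
next
  assume "\<exists>p. (\<forall>i. coeff p i \<in> A) \<and> x = poly p b"
  then show "x \<in> adjoin A b"
    unfolding adjoin_def poly_altdef by blast
qed

lemma is_subring_adjoin:
  assumes A: "is_subring A"
  shows "is_subring (adjoin A b)"
proof -
  have "0 \<in> adjoin A b" "1 \<in> adjoin A b"
    unfolding mem_adjoin_iff[OF A]
    by (rule exI[of _ 0], use A in \<open>simp add: is_subring_def\<close>)
      (rule exI[of _ 1], use A in \<open>simp add: is_subring_def coeff_1\<close>)
  moreover have "x + y \<in> adjoin A b \<and> x - y \<in> adjoin A b \<and> x * y \<in> adjoin A b"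
    if xy: "x \<in> adjoin A b" "y \<in> adjoin A b" for x y
  proof -
    obtain p q where p: "\<forall>i. coeff p i \<in> A" "x = poly p b" and q: "\<forall>i. coeff q i \<in> A" "y = poly q b"
      using xy unfolding mem_adjoin_iff[OF A] by blast
    have "\<forall>i. coeff (p + q) i \<in> A" "\<forall>i. coeff (p - q) i \<in> A"
      using A p(1) q(1) by (simp_all add: is_subring_def)
    moreover have "\<forall>i. coeff (p * q) i \<in> A"
      unfolding coeff_mult
      using A p(1) q(1) by (auto simp: is_subring_def intro!: is_subring_sum[OF A])
    ultimately show ?thesis
      unfolding mem_adjoin_iff[OF A] p(2) q(2) by (metis poly_add poly_diff poly_mult)
  qed
  ultimately show ?thesis
    unfolding is_subring_def by blast
qed

lemma subset_adjoin:
  assumes "is_subring A"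
  shows "A \<subseteq> adjoin A b"
proof
  fix c
  assume "c \<in> A"
  with assms have "(\<forall>i. coeff [:c:] i \<in> A) \<and> c = poly [:c:] b"
    by (simp add: is_subring_def coeff_pCons split: nat.split)
  then show "c \<in> adjoin A b"
    unfolding mem_adjoin_iff[OF assms] by blast
qed

lemma adjoin_eq_self:
  assumes A: "is_subring A" and "b \<in> A"
  shows "adjoin A b = A"
proof
  show "adjoin A b \<subseteq> A"
  proof
    fix x
    assume "x \<in> adjoin A b"
    then obtain n c where c: "\<forall>k\<le>n. c k \<in> A" and x: "x = (\<Sum>k\<le>n. c k * b ^ k)"
      unfolding adjoin_def by blast
    have "c k * b ^ k \<in> A" if "k \<le> n" for k
      using A c that is_subring_power[OF A \<open>b \<in> A\<close>, of k] unfolding is_subring_def by blast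
    then show "x \<in> A"
      unfolding x by (intro is_subring_sum[OF A]) simp
  qed
  show "A \<subseteq> adjoin A b"
    using A by (rule subset_adjoin)
qed

lemma adjoin_split_constant:
  assumes A: "is_subring A" and "x \<in> adjoin A b"
  obtains c y where "c \<in> A" "y \<in> adjoin A b" "x = c + b * y"
proof -
  obtain p where p: "\<forall>i. coeff p i \<in> A" "x = poly p b"
    using assms unfolding mem_adjoin_iff[OF A] by blast
  obtain c q where "p = pCons c q"
    by (cases p)
  with p have "c \<in> A" "poly q b \<in> adjoin A b" "x = c + b * poly q b"
    unfolding mem_adjoin_iff[OF A] by (metis coeff_pCons_0, metis coeff_pCons_Suc, simp)
  then show ?thesis
    using that by blast
qed

subsection \<open>Cancelling powers of b\<close>

lemma adjoin_cancel_factor: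
  fixes A :: "'b::idom set"
  assumes A: "is_subring A" and b: "b \<noteq> 0"
    and divisible: "\<And>c. c \<in> A \<Longrightarrow> b dvd c \<Longrightarrow> \<exists>x\<in>adjoin A b. c = b * x"
    and "b * w \<in> adjoin A b"
  shows "w \<in> adjoin A b"
proof -
  obtain c y where c: "c \<in> A" and y: "y \<in> adjoin A b" and split: "b * w = c + b * y"
    using adjoin_split_constant[OF A assms(4)] .
  have "c = b * (w - y)"
    using split by (simp add: algebra_simps)
  then obtain x where x: "x \<in> adjoin A b" and "c = b * x"
    using divisible[OF c] dvd_triv_left by blast
  with split b have "w = x + y"
    by (simp add: distrib_left[symmetric])
  with x y show ?thesis
    using is_subring_adjoin[OF A] unfolding is_subring_def by blast
qed

lemma adjoin_cancel_power:
  fixes A :: "'b::idom set"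
  assumes A: "is_subring A" and b: "b \<noteq> 0"
    and divisible: "\<And>c. c \<in> A \<Longrightarrow> b dvd c \<Longrightarrow> \<exists>x\<in>adjoin A b. c = b * x"
  shows "b ^ n * w \<in> adjoin A b \<Longrightarrow> w \<in> adjoin A b"
proof (induct n)
  case 0
  then show ?case by simp
next
  case (Suc n)
  have "b * (b ^ n * w) \<in> adjoin A b"
    using Suc(2) by (simp add: mult.assoc)
  then show ?case
    using adjoin_cancel_factor[OF A b divisible] Suc(1) by blast
qed

lemma localize_inter_range_emb:
  fixes C :: "'b::idom set"
  assumes b: "b \<noteq> 0" and cancel: "\<And>n w. b ^ n * w \<in> C \<Longrightarrow> w \<in> C"
  shows "localize C b \<inter> range emb = emb ` C"
proof
  show "emb ` C \<subseteq> localize C b \<inter> range emb"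
    unfolding localize_def by (force intro: exI[of _ 0])
  show "localize C b \<inter> range emb \<subseteq> emb ` C"
  proof
    fix t
    assume "t \<in> localize C b \<inter> range emb"
    then obtain y n z where y: "y \<in> C" and t: "t = Fraction_Field.Fract y (b ^ n)" "t = emb z"
      unfolding localize_def by blast
    then have "b ^ n * z = y"
      using b by (simp add: eq_fract mult.commute)
    with y have "z \<in> C"
      using cancel by blast
    with t show "t \<in> emb ` C"
      by blast
  qed
qed

lemma alg_gen_divisible:
  assumes R: "is_subring R"
    and ker: "{p \<in> poly_ring R s. b dvd eval_mpoly a p} \<subseteq> ideal_gen (poly_ring R s) S"
    and S_img: "\<forall>f\<in>S. \<exists>x\<in>adjoin (alg_gen R s a) b. eval_mpoly a f = b * x"
    and c: "c \<in> alg_gen R s a" "b dvd c"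
  shows "\<exists>x\<in>adjoin (alg_gen R s a) b. c = b * x"
proof -
  let ?A = "alg_gen R s a"
  have A: "is_subring ?A"
    using R by (rule is_subring_alg_gen)
  obtain r where r: "r \<in> poly_ring R s" and c_eq: "c = eval_mpoly a r"
    using c(1) unfolding alg_gen_def by blast
  with c(2) ker have "r \<in> ideal_gen (poly_ring R s) S"
    by blast
  then obtain n :: nat and q g where qg: "\<forall>j<n. q j \<in> poly_ring R s \<and> g j \<in> S"
    and r_eq: "r = (\<Sum>j<n. q j * g j)"
    unfolding ideal_gen_def mem_Collect_eq by blast
  have "\<forall>j\<in>{..<n}. \<exists>x\<in>adjoin ?A b. eval_mpoly a (g j) = b * x"
    using qg S_img by blast
  then obtain X where X: "\<And>j. j < n \<Longrightarrow> X j \<in> adjoin ?A b \<and> eval_mpoly a (g j) = b * X j"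
    by (metis bchoice lessThan_iff)
  have "c = b * (\<Sum>j<n. eval_mpoly a (q j) * X j)"
    unfolding c_eq r_eq eval_mpoly_sum eval_mpoly_mult sum_distrib_left
    using X by (intro sum.cong) (simp_all add: algebra_simps)
  moreover have "(\<Sum>j<n. eval_mpoly a (q j) * X j) \<in> adjoin ?A b"
  proof (rule is_subring_sum[OF is_subring_adjoin[OF A]])
    fix j
    assume "j \<in> {..<n}"
    then have "eval_mpoly a (q j) \<in> ?A" "X j \<in> adjoin ?A b"
      using qg X unfolding alg_gen_def by auto
    then have "eval_mpoly a (q j) \<in> adjoin ?A b" "X j \<in> adjoin ?A b"
      using subset_adjoin[OF A] by blast+
    then show "eval_mpoly a (q j) * X j \<in> adjoin ?A b"
      using is_subring_adjoin[OF A] unfolding is_subring_def by blast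
  qed
  ultimately show ?thesis
    by blast
qed

theorem lemma5p5:
  fixes R :: "'b::idom set" and s :: nat and a :: "nat \<Rightarrow> 'b" and b :: 'b
    and S :: "'b mpoly set"
  assumes R: "is_subring R"
    and a_nz: "\<forall>i<s. a i \<noteq> 0"
    and b_nz: "b \<noteq> 0"
    and b_nunit: "\<not> b dvd 1"
    and S_sub: "S \<subseteq> poly_ring R s"
    and ker: "{p \<in> poly_ring R s. b dvd eval_mpoly a p} = ideal_gen (poly_ring R s) S"
    and S_img: "\<forall>f\<in>S. \<exists>x\<in>adjoin (alg_gen R s a) b. eval_mpoly a f = b * x"
  shows "localize (adjoin (alg_gen R s a) b) b \<inter> range emb = emb ` adjoin (alg_gen R s a) b
         \<and> (b \<in> alg_gen R s a \<longrightarrow>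
           localize (alg_gen R s a) b \<inter> range emb = emb ` alg_gen R s a)"
proof -
  define A where "A = alg_gen R s a"
  have A: "is_subring A"
    unfolding A_def using R by (rule is_subring_alg_gen)
  have divisible: "\<exists>x\<in>adjoin A b. c = b * x" if "c \<in> A" "b dvd c" for c
    using alg_gen_divisible[OF R _ S_img] ker that unfolding A_def by blast
  have inter_adjoin: "localize (adjoin A b) b \<inter> range emb = emb ` adjoin A b"
    using b_nz adjoin_cancel_power[OF A b_nz divisible] by (rule localize_inter_range_emb)
  moreover have "localize A b \<inter> range emb = emb ` A" if "b \<in> A"
    using inter_adjoin adjoin_eq_self[OF A that] by simp
  ultimately show ?thesis
    unfolding A_def by blast
qed

end
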